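(* Assume (H-tree). For every $r\in(0,1)$ there exist constants $C=C_r>0$ and $c=c_r>0$ such that for all $n\ge1$, \[ \mathbf P\big(\#(\widehat{\mathcal T}_-[0,n]\cap\mathcal X)>rn\big)\le C e^{-cn}, \] where $\widehat{\mathcal T}_-[0,n]=\{\widehat{\mathcal T}_-(0),\dots,\widehat{\mathcal T}_-(n)\}$.
   Context: (H-tree): $\mu$ is a probability distribution on $\mathbb N$ with mean $1$ and variance $\sigma^2\in(0,\infty)$. Invariant tree: take an infinite spine $\mathcal X=\{\varnothing_0=\varnothing,\varnothing_1,\varnothing_2,\dots\}$ with edges $\{\varnothing_n,\varnothing_{n+1}\}$. Independently, for each $n\ge1$, with probability $\mu(i+j+1)$ the vertex $\varnothing_n$ receives $i$ extra children on the left and $j$ extra children on the right of the spine, each the root of an independent Galton–Watson tree with offspring law $\mu$; let $\mathcal T^g_n$ (resp. $\mathcal T^d_n$) be the planar tree rooted at $\varnothing_n$ formed by $\varnothing_n$ and its left (resp. right) extra children with their descendants. Also $\mathcal T^d_0$ is an independent Galton–Watson($\mu$) tree rooted at $\varnothing_0$ and $\mathcal T^g_0=\{\varnothing_0\}$. The tree $\widehat{\mathcal T}_-$ is the union of the spine and all $\mathcal T^g_n$, enumerated as follows: $\widehat{\mathcal T}_-(0)=\varnothing_0$, $\widehat{\mathcal T}_-(1)=\varnothing_1$, then the vertices of $\mathcal T^g_1\setminus\{\varnothing_1\}$ in depth-first order, then $\varnothing_2$, then the vertices of $\mathcal T^g_2\setminus\{\varnothing_2\}$ in depth-first order, and so on.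 $\mathbf P$ denotes the law of this random tree. *)

theory Defs
  imports "HOL-Probability.Probability" "HOL-Library.Extended_Nat"
begin

text \<open>Planar (Ulam-Harris) Galton-Watson tree built from offspring numbers
  xi w attached to every label w (a list of child indices).\<close>
inductive_set gw_tree :: "(nat list \<Rightarrow> nat) \<Rightarrow> nat list set" for xi where
  gw_root: "[] \<in> gw_tree xi"
| gw_child: "w \<in> gw_tree xi \<Longrightarrow> m < xi w \<Longrightarrow> w @ [m] \<in> gw_tree xi"

definition esize :: "'a set \<Rightarrow> enat" where
  "esize A = (if finite A then enat (card A) else \<infinity>)"

text \<open>The left tree T^g_n rooted at the spine vertex with index n (n \<ge> 1):
  root [] plus, for each left extra child m < (number of left children),
  a Galton-Watson tree with offspring numbers xi n m.\<close>
definition left_tree :: "(nat \<Rightarrow> nat \<times> nat) \<Rightarrow> (nat \<Rightarrow> nat \<Rightarrow> nat list \<Rightarrow> nat) \<Rightarrow> nat \<Rightarrow> nat list set"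
  where "left_tree LR xi n =
     insert [] {m # w | m w. m < fst (LR n) \<and> w \<in> gw_tree (xi n m)}"

text \<open>Position of the spine vertex with index k in the enumeration of the tree
  T_-: position 0 for the spine root, and for k \<ge> 1 it is
  k + sum over i=1..k-1 of (|T^g_i| - 1)  (infinite if some earlier left tree is infinite).\<close>
fun spine_pos :: "(nat \<Rightarrow> nat \<times> nat) \<Rightarrow> (nat \<Rightarrow> nat \<Rightarrow> nat list \<Rightarrow> nat) \<Rightarrow> nat \<Rightarrow> enat" where
  "spine_pos LR xi 0 = 0"
| "spine_pos LR xi (Suc k) =
     enat (Suc k) + (\<Sum>i\<in>{1..k}. esize (left_tree LR xi i) - 1)"

text \<open>Number of spine vertices among the first n+1 enumerated vertices
  T_-(0),...,T_-(n).\<close>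
definition spine_count :: "(nat \<Rightarrow> nat \<times> nat) \<Rightarrow> (nat \<Rightarrow> nat \<Rightarrow> nat list \<Rightarrow> nat) \<Rightarrow> nat \<Rightarrow> nat" where
  "spine_count LR xi n = card {k. spine_pos LR xi k \<le> enat n}"

end

theory Submission
  imports Defs
begin

text \<open>If more than \<open>r n\<close> spine vertices occur among the first \<open>n + 1\<close> enumerated vertices,
  then so does the spine vertex \<open>K = \<lfloor>r n\<rfloor>\<close>, hence the left trees of the spine vertices
  \<open>1, \<dots>, K - 1\<close> have at most \<open>n - K\<close> non-root vertices in total. Each of them contains the
  vertices of depth at most \<open>D\<close> with all labels below \<open>B\<close> in the Galton-Watson tree of its first
  left child (if there is one); their numbers are independent and bounded. Since \<open>\<mu>\<close> has mean
  one, the expected number of such vertices at depth \<open>d\<close> is \<open>(\<Sum>m<B. \<mu>(m,\<infinity>))\<^sup>d \<longrightarrow> 1\<close> as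
  \<open>B \<rightarrow> \<infinity>\<close>, and a first left child exists with positive probability because \<open>\<mu>\<close> charges some
  \<open>k \<ge> 2\<close>. So for suitable \<open>D\<close> and \<open>B\<close> each count has mean at least \<open>2 / r\<close>, the expected sum
  exceeds \<open>n - K\<close> by at least \<open>n / 2\<close>, and Hoeffding's inequality makes the event exponentially
  unlikely.\<close>

section \<open>Galton-Watson trees and bounded words\<close>

lemma snoc_in_gw_tree_iff: "w @ [m] \<in> gw_tree \<xi> \<longleftrightarrow> w \<in> gw_tree \<xi> \<and> m < \<xi> w"
proof
  assume "w @ [m] \<in> gw_tree \<xi>"
  then show "w \<in> gw_tree \<xi> \<and> m < \<xi> w"
    by (cases rule: gw_tree.cases) auto
qed (auto intro: gw_child)

lemma gw_tree_cong:
  assumes "\<And>j. j < length w \<Longrightarrow> \<xi> (take j w) = \<xi>' (take j w)"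
  shows "w \<in> gw_tree \<xi> \<longleftrightarrow> w \<in> gw_tree \<xi>'"
  using assms
proof (induction w rule: rev_induct)
  case Nil
  then show ?case by (auto intro: gw_root)
next
  case (snoc m w)
  have "\<xi> (take j w) = \<xi>' (take j w)" if "j < length w" for j
    using snoc.prems[of j] that by simp
  moreover have "\<xi> w = \<xi>' w"
    using snoc.prems[of "length w"] by simp
  ultimately show ?case
    using snoc.IH by (simp add: snoc_in_gw_tree_iff)
qed

definition short_words :: "nat \<Rightarrow> 'a set \<Rightarrow> 'a list set" where
  "short_words D A = {w. length w \<le> D \<and> set w \<subseteq> A}"

lemma short_words_UN: "short_words D A = (\<Union>d\<le>D. {w. set w \<subseteq> A \<and> length w = d})"
  unfolding short_words_def by auto

lemma finite_short_words: "finite A \<Longrightarrow> finite (short_words D A)"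
  unfolding short_words_UN by (auto intro: finite_lists_length_eq)

lemma Nil_in_short_words: "[] \<in> short_words D A"
  by (simp add: short_words_def)

lemma take_in_short_words: "w \<in> short_words D A \<Longrightarrow> take j w \<in> short_words D A"
  unfolding short_words_def using set_take_subset[of j w] by auto

lemma card_short_words_pos: "finite A \<Longrightarrow> 0 < card (short_words D A)"
  using finite_short_words Nil_in_short_words card_gt_0_iff by blast

lemma sum_prod_list_lists_length:
  fixes t :: "'a \<Rightarrow> 'b::comm_semiring_1"
  assumes "finite A"
  shows "(\<Sum>w\<in>{w. set w \<subseteq> A \<and> length w = d}. prod_list (map t w)) = (\<Sum>a\<in>A. t a) ^ d"
proof (induction d)
  case 0
  have "{w. set w \<subseteq> A \<and> length w = 0} = {[]}"
    by auto
  then show ?case by simp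
next
  case (Suc d)
  let ?W = "{w. set w \<subseteq> A \<and> length w = d}"
  have W: "{w. set w \<subseteq> A \<and> length w = Suc d} = (\<lambda>(a, w). a # w) ` (A \<times> ?W)"
    by (auto simp: length_Suc_conv image_iff)
  have "inj_on (\<lambda>(a, w). a # w) (A \<times> ?W)"
    by (auto simp: inj_on_def)
  then have "(\<Sum>w\<in>{w. set w \<subseteq> A \<and> length w = Suc d}. prod_list (map t w))
      = (\<Sum>(a, w)\<in>A \<times> ?W. t a * prod_list (map t w))"
    unfolding W by (subst sum.reindex) (auto simp: case_prod_unfold)
  also have "\<dots> = (\<Sum>a\<in>A. t a) * (\<Sum>w\<in>?W. prod_list (map t w))"
    by (simp add: sum.cartesian_product[symmetric] sum_product)
  finally show ?case
    using Suc by simp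
qed

lemma sum_prod_list_short_words:
  fixes t :: "'a \<Rightarrow> 'b::comm_semiring_1"
  assumes "finite A"
  shows "(\<Sum>w\<in>short_words D A. prod_list (map t w)) = (\<Sum>d\<le>D. (\<Sum>a\<in>A. t a) ^ d)"
  unfolding short_words_UN
  by (subst sum.UNION_disjoint) (auto simp: assms sum_prod_list_lists_length finite_lists_length_eq)

section \<open>Positions of the spine vertices\<close>

definition truncated_left_size ::
    "nat \<Rightarrow> nat \<Rightarrow> (nat \<Rightarrow> nat \<times> nat) \<Rightarrow> (nat \<Rightarrow> nat \<Rightarrow> nat list \<Rightarrow> nat) \<Rightarrow> nat \<Rightarrow> nat" where
  "truncated_left_size D B LR \<xi> i =
     (if 1 \<le> fst (LR i) then card {w \<in> short_words D {..<B}. w \<in> gw_tree (\<xi> i 0)} else 0)"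

lemma truncated_left_size_le:
  "enat (truncated_left_size D B LR \<xi> i) \<le> esize (left_tree LR \<xi> i) - 1"
proof (cases "1 \<le> fst (LR i) \<and> finite (left_tree LR \<xi> i)")
  case False
  then show ?thesis
    by (auto simp: truncated_left_size_def esize_def zero_enat_def[symmetric])
next
  case True
  let ?S = "{w \<in> short_words D {..<B}. w \<in> gw_tree (\<xi> i 0)}"
  have "insert [] ((#) 0 ` ?S) \<subseteq> left_tree LR \<xi> i"
    using True by (auto simp: left_tree_def)
  then have "card (insert [] ((#) 0 ` ?S)) \<le> card (left_tree LR \<xi> i)"
    using True by (intro card_mono) auto
  moreover have "card (insert [] ((#) 0 ` ?S)) = Suc (card ?S)"
    using finite_short_words[of "{..<B}" D]
    by (subst card_insert_disjoint) (auto simp: card_image)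
  ultimately show ?thesis
    using True by (simp add: truncated_left_size_def esize_def one_enat_def)
qed

lemma enat_le_spine_pos: "enat k \<le> spine_pos LR \<xi> k"
  by (cases k) (auto simp: zero_enat_def[symmetric])

lemma spine_pos_mono:
  assumes "k \<le> k'"
  shows "spine_pos LR \<xi> k \<le> spine_pos LR \<xi> k'"
proof -
  have "spine_pos LR \<xi> k \<le> spine_pos LR \<xi> (Suc k)" for k
    by (cases k) (auto simp: sum.cl_ivl_Suc add_mono add_increasing2)
  then show ?thesis
    using lift_Suc_mono_le[of "spine_pos LR \<xi>"] assms by blast
qed

text \<open>Since positions increase along the spine, the counted spine vertices form an initial
  segment of the spine.\<close>
lemma spine_pos_le_iff_less_spine_count:
  "spine_pos LR \<xi> k \<le> enat n \<longleftrightarrow> k < spine_count LR \<xi> n"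
proof -
  define S where "S = {k. spine_pos LR \<xi> k \<le> enat n}"
  have "S \<subseteq> {..n}"
  proof
    fix k assume "k \<in> S"
    then have "spine_pos LR \<xi> k \<le> enat n"
      by (simp add: S_def)
    then have "enat k \<le> enat n"
      by (rule order_trans[OF enat_le_spine_pos])
    then show "k \<in> {..n}"
      by simp
  qed
  then have fin: "finite S"
    using finite_subset by blast
  have down: "j \<in> S" if "k \<in> S" "j \<le> k" for j k
    using that spine_pos_mono[of j k LR \<xi>] by (simp add: S_def)
  have "k \<in> S \<longleftrightarrow> k < card S"
  proof
    assume "k \<in> S"
    then have "{..k} \<subseteq> S"
      using down by auto
    then have "card {..k} \<le> card S"
      by (rule card_mono[OF fin])
    then show "k < card S"
      by simp
  next
    assume k: "k < card S"
    show "k \<in> S"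
    proof (rule ccontr)
      assume "k \<notin> S"
      then have "S \<subseteq> {..<k}"
        using down by (auto simp: not_less[symmetric])
      then show False
        using card_mono[of "{..<k}" S] k by simp
    qed
  qed
  then show ?thesis
    by (simp add: S_def spine_count_def)
qed

lemma spine_count_bound:
  assumes "Suc k < spine_count LR \<xi> n"
  shows "Suc k + (\<Sum>i\<in>{1..k}. truncated_left_size D B LR \<xi> i) \<le> n"
proof -
  have "enat (\<Sum>i\<in>{1..k}. truncated_left_size D B LR \<xi> i)
      \<le> (\<Sum>i\<in>{1..k}. esize (left_tree LR \<xi> i) - 1)"
    unfolding of_nat_eq_enat[symmetric] of_nat_sum
    by (intro sum_mono) (simp add: of_nat_eq_enat truncated_left_size_le)
  then have "enat (Suc k) + enat (\<Sum>i\<in>{1..k}. truncated_left_size D B LR \<xi> i)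
      \<le> spine_pos LR \<xi> (Suc k)"
    by (simp only: spine_pos.simps plus_enat_simps(1)[symmetric]) (rule add_left_mono)
  also have "\<dots> \<le> enat n"
    using assms spine_pos_le_iff_less_spine_count by blast
  finally show ?thesis
    by simp
qed

section \<open>Independent families and Hoeffding's inequality\<close>

lemma sets_PiM_count_space_finite:
  fixes K :: "'i set"
  assumes fin: "finite K"
    and A: "A \<subseteq> space (PiM K (\<lambda>_. count_space (UNIV :: 'v::countable set)))"
  shows "A \<in> sets (PiM K (\<lambda>_. count_space (UNIV :: 'v set)))"
proof -
  have space: "space (PiM K (\<lambda>_. count_space (UNIV :: 'v set))) = PiE K (\<lambda>_. UNIV)"
    by (simp add: space_PiM)
  have "countable A"
    using countable_subset[OF A] countable_PiE[OF fin, of "\<lambda>_. UNIV :: 'v set"] space by auto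
  moreover have "A = (\<Union>x\<in>A. PiE K (\<lambda>i. {x i}))"
  proof -
    have "PiE K (\<lambda>i. {x i}) = {x}" if "x \<in> A" for x
      using that A by (intro PiE_singleton) (auto simp: space PiE_iff)
    then show ?thesis
      by simp
  qed
  moreover have "(\<Union>x\<in>A. PiE K (\<lambda>i. {x i})) \<in> sets (PiM K (\<lambda>_. count_space (UNIV :: 'v set)))"
    using \<open>countable A\<close> fin
    by (intro sets.countable_UN') (auto intro!: sets_PiM_I_countable countable_finite)
  ultimately show ?thesis
    by simp
qed

lemma measurable_PiM_count_space_finite:
  fixes K :: "'i set"
  assumes "finite K"
    and "g \<in> space (PiM K (\<lambda>_. count_space (UNIV :: 'v::countable set))) \<rightarrow> space N"
  shows "g \<in> measurable (PiM K (\<lambda>_. count_space (UNIV :: 'v set))) N"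
  using assms unfolding measurable_def by (auto intro!: sets_PiM_count_space_finite)

context prob_space
begin

lemma events_restrict:
  fixes X :: "'i \<Rightarrow> 'a \<Rightarrow> 'v::countable"
  assumes indep: "indep_vars (\<lambda>_. count_space UNIV) X I" and "finite K" "K \<subseteq> I"
  shows "{\<omega> \<in> space M. P (restrict (\<lambda>i. X i \<omega>) K)} \<in> events"
proof -
  have "\<And>i. i \<in> K \<Longrightarrow> X i \<in> measurable M (count_space UNIV)"
    using indep assms(3) unfolding indep_vars_def by auto
  then have "(\<lambda>\<omega>. P (restrict (\<lambda>i. X i \<omega>) K)) \<in> measurable M (count_space UNIV)"
    by (intro measurable_compose[OF measurable_restrict measurable_PiM_count_space_finite])
       (auto simp: assms(2))
  then show ?thesis
    by (simp add: pred_def)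
qed

lemma prob_restrict_indep:
  fixes X :: "'i \<Rightarrow> 'a \<Rightarrow> 'v::countable"
  assumes indep: "indep_vars (\<lambda>_. count_space UNIV) X I"
    and fin: "finite A" "finite B" and AB: "A \<inter> B = {}" "A \<subseteq> I" "B \<subseteq> I"
  shows "prob {\<omega> \<in> space M. P (restrict (\<lambda>i. X i \<omega>) A) \<and> Q (restrict (\<lambda>i. X i \<omega>) B)} =
    prob {\<omega> \<in> space M. P (restrict (\<lambda>i. X i \<omega>) A)} * prob {\<omega> \<in> space M. Q (restrict (\<lambda>i. X i \<omega>) B)}"
proof -
  let ?MA = "PiM A (\<lambda>_. count_space (UNIV :: 'v set))"
  let ?MB = "PiM B (\<lambda>_. count_space (UNIV :: 'v set))"
  have "indep_var ?MA (\<lambda>\<omega>. restrict (\<lambda>i. X i \<omega>) A) ?MB (\<lambda>\<omega>. restrict (\<lambda>i. X i \<omega>) B)"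
    by (rule indep_var_restrict[OF indep AB])
  from indep_varD[OF this, of "{f \<in> space ?MA. P f}" "{f \<in> space ?MB. Q f}"]
  have "prob ((\<lambda>\<omega>. (restrict (\<lambda>i. X i \<omega>) A, restrict (\<lambda>i. X i \<omega>) B)) -`
          ({f \<in> space ?MA. P f} \<times> {f \<in> space ?MB. Q f}) \<inter> space M)
      = prob ((\<lambda>\<omega>. restrict (\<lambda>i. X i \<omega>) A) -` {f \<in> space ?MA. P f} \<inter> space M)
        * prob ((\<lambda>\<omega>. restrict (\<lambda>i. X i \<omega>) B) -` {f \<in> space ?MB. Q f} \<inter> space M)"
    using fin by (simp add: sets_PiM_count_space_finite)
  moreover have "(\<lambda>\<omega>. (restrict (\<lambda>i. X i \<omega>) A, restrict (\<lambda>i. X i \<omega>) B)) -`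
          ({f \<in> space ?MA. P f} \<times> {f \<in> space ?MB. Q f}) \<inter> space M
      = {\<omega> \<in> space M. P (restrict (\<lambda>i. X i \<omega>) A) \<and> Q (restrict (\<lambda>i. X i \<omega>) B)}"
    by (auto simp: space_PiM)
  moreover have "(\<lambda>\<omega>. restrict (\<lambda>i. X i \<omega>) A) -` {f \<in> space ?MA. P f} \<inter> space M
      = {\<omega> \<in> space M. P (restrict (\<lambda>i. X i \<omega>) A)}"
    "(\<lambda>\<omega>. restrict (\<lambda>i. X i \<omega>) B) -` {f \<in> space ?MB. Q f} \<inter> space M
      = {\<omega> \<in> space M. Q (restrict (\<lambda>i. X i \<omega>) B)}"
    by (auto simp: space_PiM)
  ultimately show ?thesis
    by simp
qed

lemma prob_eq_measure_pmf:
  fixes X :: "'a \<Rightarrow> 'v::countable"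
  assumes X: "X \<in> measurable M (count_space UNIV)"
    and law: "\<And>k. prob {\<omega> \<in> space M. X \<omega> = k} = pmf p k"
  shows "prob {\<omega> \<in> space M. X \<omega> \<in> A} = measure_pmf.prob p A"
proof -
  have "distr M (count_space UNIV) X = measure_pmf p"
  proof (rule measure_eqI_countable[where A = UNIV])
    fix k :: 'v
    have "X -` {k} \<inter> space M = {\<omega> \<in> space M. X \<omega> = k}"
      by auto
    then show "emeasure (distr M (count_space UNIV) X) {k} = emeasure (measure_pmf p) {k}"
      using X law[of k] by (simp add: emeasure_distr emeasure_eq_measure emeasure_pmf_single)
  qed auto
  moreover have "X -` A \<inter> space M = {\<omega> \<in> space M. X \<omega> \<in> A}"
    by auto
  ultimately show ?thesis
    using X by (metis measure_distr sets_count_space UNIV_I Pow_UNIV sets_measure_pmf)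
qed

lemma prob_sum_le_Hoeffding:
  fixes X :: "'i \<Rightarrow> 'a \<Rightarrow> real"
  assumes I: "finite I" "I \<noteq> {}" and indep: "indep_vars (\<lambda>_. borel) X I"
    and bounds: "\<And>i x. i \<in> I \<Longrightarrow> 0 \<le> X i x \<and> X i x \<le> b" and b: "0 < b"
    and t: "t \<le> (\<Sum>i\<in>I. expectation (X i))"
  shows "prob {x \<in> space M. (\<Sum>i\<in>I. X i x) \<le> t}
    \<le> exp (- 2 * ((\<Sum>i\<in>I. expectation (X i)) - t)\<^sup>2 / (real (card I) * b\<^sup>2))"
proof -
  interpret Hoeffding_ineq M I X "\<lambda>_. 0" "\<lambda>_. b" "\<Sum>i\<in>I. expectation (X i)"
    by unfold_locales (use I indep bounds in auto)
  have "0 < real (card I)"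
    using I by (simp add: card_gt_0_iff)
  then have "0 < (\<Sum>i\<in>I. (b - 0)\<^sup>2)"
    using b by simp
  from Hoeffding_ineq_le[OF _ this, of "(\<Sum>i\<in>I. expectation (X i)) - t"]
  show ?thesis
    using t by simp
qed

end

lemma exp_decay_extend:
  fixes f :: "nat \<Rightarrow> real"
  assumes c: "0 < c" and le1: "\<And>n. f n \<le> 1"
    and large: "\<And>n. x \<le> real n \<Longrightarrow> f n \<le> exp (- c * real n)"
  shows "\<exists>C>0. \<forall>n. f n \<le> C * exp (- c * real n)"
proof (intro exI[of _ "exp (c * \<bar>x\<bar>)"] conjI allI)
  fix n
  show "f n \<le> exp (c * \<bar>x\<bar>) * exp (- c * real n)"
  proof (cases "x \<le> real n")
    case True
    have "exp (- c * real n) \<le> exp (c * \<bar>x\<bar>) * exp (- c * real n)"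
      using c by simp
    then show ?thesis
      using large[OF True] by linarith
  next
    case False
    have "1 \<le> exp (c * \<bar>x\<bar> + - c * real n)"
      using c False by (simp add: mult_left_mono)
    also have "\<dots> = exp (c * \<bar>x\<bar>) * exp (- c * real n)"
      by (rule exp_add)
    finally show ?thesis
      using le1[of n] by linarith
  qed
qed simp

lemma exp_Hoeffding_bound_le:
  fixes n N b \<epsilon> :: real
  assumes \<epsilon>: "n / 2 \<le> \<epsilon>" and N: "0 < N" "N \<le> n" and b: "0 < b"
  shows "exp (- 2 * \<epsilon>\<^sup>2 / (N * b\<^sup>2)) \<le> exp (- n / (2 * b\<^sup>2))"
proof -
  have "(n / 2)\<^sup>2 \<le> \<epsilon>\<^sup>2"
    using \<epsilon> N by (intro power_mono) auto
  then have "n / (2 * b\<^sup>2) \<le> 2 * \<epsilon>\<^sup>2 / (n * b\<^sup>2)"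
    using N b by (simp add: field_simps power2_eq_square)
  also have "\<dots> \<le> 2 * \<epsilon>\<^sup>2 / (N * b\<^sup>2)"
    using N b by (intro divide_left_mono mult_right_mono) auto
  finally show ?thesis
    by simp
qed

section \<open>The offspring law\<close>

lemma exists_pmf_pos_ge_two:
  fixes p :: "nat pmf"
  assumes mean: "measure_pmf.expectation p real = 1"
    and var_pos: "measure_pmf.variance p real > 0"
  shows "\<exists>k\<ge>2. pmf p k > 0"
proof (rule ccontr)
  assume "\<not> ?thesis"
  then have zero: "pmf p k = 0" if "k \<ge> 2" for k
    using that by (meson not_less pmf_nonneg order.antisym)
  have "set_pmf p \<subseteq> {0, 1}"
  proof
    fix k assume "k \<in> set_pmf p"
    then have "\<not> 2 \<le> k"
      using zero by (auto simp: set_pmf_iff)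
    then show "k \<in> {0, 1}"
      by auto
  qed
  then have sums: "measure_pmf.expectation p f = pmf p 0 * f 0 + pmf p 1 * f 1"
    "pmf p 0 + pmf p 1 = 1" for f :: "nat \<Rightarrow> real"
    using integral_measure_pmf[of "{0, 1}" p f] sum_pmf_eq_1[of "{0, 1}" p] by auto
  then have "pmf p 1 = 1" "pmf p 0 = 0"
    using mean by simp_all
  then have "measure_pmf.variance p real = 0"
    using sums(1)[of "\<lambda>k. (real k - 1)\<^sup>2"] mean by simp
  then show False
    using var_pos by simp
qed

lemma sum_prob_greaterThan_eq_expectation_min:
  fixes p :: "nat pmf"
  shows "(\<Sum>m<B. measure_pmf.prob p {m<..}) = measure_pmf.expectation p (\<lambda>k. real (min k B))"
proof -
  have "real (min k B) = (\<Sum>m<B. indicator {m<..} k)" for k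
  proof -
    have "{m \<in> {..<B}. m < k} = {..<min k B}"
      by auto
    then show ?thesis
      by (simp add: indicator_def sum.If_cases Int_def conj_commute)
  qed
  then show ?thesis
    by (simp add: Bochner_Integration.integral_sum measure_pmf.integrable_const_bound[where B = 1])
qed

text \<open>The \<open>d\<close>-th power is the expected number of vertices at depth \<open>d\<close> with labels below \<open>B\<close>
  in a Galton-Watson tree; it tends to one since \<open>\<Sum>m<B. P(\<xi> > m) = E (min \<xi> B)\<close>.\<close>
lemma expected_truncated_gw_size_unbounded:
  fixes p :: "nat pmf"
  assumes mean: "measure_pmf.expectation p real = 1"
  shows "\<exists>D B. a \<le> (\<Sum>d\<le>D. (\<Sum>m<B. measure_pmf.prob p {m<..}) ^ d)"
proof -
  let ?m = "\<lambda>B. measure_pmf.expectation p (\<lambda>k. real (min k B))"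
  have int: "integrable (measure_pmf p) real"
    using mean not_integrable_integral_eq by fastforce
  have "?m \<longlonglongrightarrow> measure_pmf.expectation p real"
  proof (rule integral_dominated_convergence[where w = real])
    have "(\<lambda>B. real (min k B)) \<longlonglongrightarrow> real k" for k
      by (intro tendsto_eventually eventually_sequentiallyI[of k]) simp
    then show "AE k in measure_pmf p. (\<lambda>B. real (min k B)) \<longlonglongrightarrow> real k"
      by simp
  qed (auto simp: int)
  then have "(\<lambda>B. ?m B ^ nat \<lceil>2 * a\<rceil>) \<longlonglongrightarrow> 1"
    using mean tendsto_power[of ?m 1 sequentially "nat \<lceil>2 * a\<rceil>"] by simp
  from order_tendstoD(1)[OF this, of "1 / 2"]
  obtain B where B: "1 / 2 < ?m B ^ nat \<lceil>2 * a\<rceil>"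
    by (auto simp: eventually_sequentially)
  have "?m B \<le> measure_pmf.expectation p real"
    by (rule integral_mono[OF _ int]) (auto intro!: measure_pmf.integrable_const_bound[where B = B])
  then have "?m B \<le> 1"
    using mean by simp
  moreover have "0 \<le> ?m B"
    by simp
  ultimately have "1 / 2 \<le> ?m B ^ d" if "d \<le> nat \<lceil>2 * a\<rceil>" for d
    using B power_decreasing[OF that, of "?m B"] by linarith
  then have "(\<Sum>d\<le>nat \<lceil>2 * a\<rceil>. 1 / 2) \<le> (\<Sum>d\<le>nat \<lceil>2 * a\<rceil>. ?m B ^ d)"
    by (intro sum_mono) simp
  moreover have "a \<le> (\<Sum>d\<le>nat \<lceil>2 * a\<rceil>. 1 / 2 :: real)"
    using real_nat_ceiling_ge[of "2 * a"] by simp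
  ultimately show ?thesis
    unfolding sum_prob_greaterThan_eq_expectation_min by (blast intro: order_trans)
qed

section \<open>The random tree\<close>

locale spine_model =
  fixes mu :: "nat pmf" and M :: "'a measure"
    and LR :: "nat \<Rightarrow> 'a \<Rightarrow> nat \<times> nat"
    and xi :: "nat \<Rightarrow> nat \<Rightarrow> nat list \<Rightarrow> 'a \<Rightarrow> nat"
  assumes prob_space_M: "prob_space M"
    and indep: "prob_space.indep_vars M (\<lambda>_. count_space UNIV)
        (\<lambda>i \<omega>. case i of Inl n \<Rightarrow> Inl (LR n \<omega>) | Inr (n, m, w) \<Rightarrow> Inr (xi n m w \<omega>))
        (Inl ` {1..} \<union> Inr ` ({1..} \<times> UNIV))"
    and law_LR: "\<And>n i j. n \<ge> 1 \<Longrightarrow>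
        measure M {\<omega> \<in> space M. LR n \<omega> = (i, j)} = pmf mu (i + j + 1)"
    and law_xi: "\<And>n m w k. n \<ge> 1 \<Longrightarrow>
        measure M {\<omega> \<in> space M. xi n m w \<omega> = k} = pmf mu k"
begin

sublocale prob_space M
  by (rule prob_space_M)

definition inputs :: "nat + nat \<times> nat \<times> nat list \<Rightarrow> 'a \<Rightarrow> (nat \<times> nat) + nat" where
  "inputs = (\<lambda>i \<omega>. case i of Inl n \<Rightarrow> Inl (LR n \<omega>) | Inr (n, m, w) \<Rightarrow> Inr (xi n m w \<omega>))"

definition input_index :: "(nat + nat \<times> nat \<times> nat list) set" where
  "input_index = Inl ` {1..} \<union> Inr ` ({1..} \<times> UNIV)"

lemma indep_inputs: "indep_vars (\<lambda>_. count_space UNIV) inputs input_index"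
  using indep unfolding inputs_def input_index_def .

lemma measurable_xi:
  assumes "1 \<le> i"
  shows "xi i m w \<in> measurable M (count_space UNIV)"
proof -
  have "inputs (Inr (i, m, w)) \<in> measurable M (count_space UNIV)"
    using indep_inputs assms unfolding indep_vars_def input_index_def by auto
  then have "(\<lambda>\<omega>. projr (inputs (Inr (i, m, w)) \<omega>)) \<in> measurable M (count_space UNIV)"
    by simp
  then show ?thesis
    by (simp add: inputs_def)
qed

text \<open>The inputs deciding whether \<open>w\<close> is a vertex of the tree of the first left child of the
  spine vertex \<open>i\<close>: the offspring numbers of the strict prefixes of \<open>w\<close>.\<close>
definition prefix_index :: "nat \<Rightarrow> nat list \<Rightarrow> (nat + nat \<times> nat \<times> nat list) set" where
  "prefix_index i w = Inr ` ({i} \<times> {0} \<times> (\<lambda>j. take j w) ` {..<length w})"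

lemma finite_prefix_index: "finite (prefix_index i w)"
  by (simp add: prefix_index_def)

lemma prefix_index_subset: "1 \<le> i \<Longrightarrow> prefix_index i w \<subseteq> input_index"
  by (auto simp: prefix_index_def input_index_def)

lemma in_gw_tree_restrict_inputs:
  assumes "prefix_index i w \<subseteq> K"
  shows "w \<in> gw_tree (\<lambda>u. projr (restrict (\<lambda>j. inputs j \<omega>) K (Inr (i, 0, u))))
    \<longleftrightarrow> w \<in> gw_tree (\<lambda>u. xi i 0 u \<omega>)"
proof (rule gw_tree_cong)
  fix j assume "j < length w"
  then have "Inr (i, 0, take j w) \<in> K"
    using assms by (auto simp: prefix_index_def)
  then show "projr (restrict (\<lambda>j. inputs j \<omega>) K (Inr (i, 0, take j w))) = xi i 0 (take j w) \<omega>"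
    by (simp add: inputs_def)
qed

definition vertex_event :: "nat \<Rightarrow> nat list \<Rightarrow> 'a set" where
  "vertex_event i w = {\<omega> \<in> space M. w \<in> gw_tree (\<lambda>u. xi i 0 u \<omega>)}"

definition left_child_event :: "nat \<Rightarrow> 'a set" where
  "left_child_event i = {\<omega> \<in> space M. 1 \<le> fst (LR i \<omega>)}"

lemma vertex_event_restrict:
  "vertex_event i w = {\<omega> \<in> space M.
     (\<lambda>f. w \<in> gw_tree (\<lambda>u. projr (f (Inr (i, 0, u))))) (restrict (\<lambda>j. inputs j \<omega>) (prefix_index i w))}"
  unfolding vertex_event_def using in_gw_tree_restrict_inputs[of i w] by simp

lemma left_child_event_restrict:
  "left_child_event i = {\<omega> \<in> space M.
     (\<lambda>f. 1 \<le> fst (projl (f (Inl i)))) (restrict (\<lambda>j. inputs j \<omega>) {Inl i})}"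
  unfolding left_child_event_def by (simp add: inputs_def)

lemma vertex_event_in_events: "1 \<le> i \<Longrightarrow> vertex_event i w \<in> events"
  unfolding vertex_event_restrict
  by (rule events_restrict[OF indep_inputs finite_prefix_index prefix_index_subset])

lemma left_child_event_in_events: "1 \<le> i \<Longrightarrow> left_child_event i \<in> events"
  unfolding left_child_event_restrict
  by (rule events_restrict[OF indep_inputs]) (auto simp: input_index_def)

lemma prob_vertex_event:
  assumes i: "1 \<le> i"
  shows "prob (vertex_event i w) = (\<Prod>m\<leftarrow>w. measure_pmf.prob mu {m<..})"
proof (induction w rule: rev_induct)
  case Nil
  then show ?case
    by (simp add: vertex_event_def gw_root prob_space)
next
  case (snoc m w)
  let ?B = "{Inr (i, 0, w)} :: (nat + nat \<times> nat \<times> nat list) set"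
  have split: "vertex_event i (w @ [m]) = {\<omega> \<in> space M.
      (\<lambda>f. w \<in> gw_tree (\<lambda>u. projr (f (Inr (i, 0, u))))) (restrict (\<lambda>j. inputs j \<omega>) (prefix_index i w))
      \<and> (\<lambda>f. m < projr (f (Inr (i, 0, w)))) (restrict (\<lambda>j. inputs j \<omega>) ?B)}"
    unfolding vertex_event_def snoc_in_gw_tree_iff
    using in_gw_tree_restrict_inputs[of i w "prefix_index i w"] by (auto simp: inputs_def)
  have disj: "prefix_index i w \<inter> ?B = {}"
    by (auto simp: prefix_index_def) (metis not_le take_all_iff)
  have "prob (vertex_event i (w @ [m]))
      = prob (vertex_event i w) * prob {\<omega> \<in> space M. m < xi i 0 w \<omega>}"
    unfolding split vertex_event_restrict[of i w]
    by (subst prob_restrict_indep[OF indep_inputs finite_prefix_index _ disj prefix_index_subset[OF i]])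
       (use i in \<open>auto simp: input_index_def inputs_def\<close>)
  also have "prob {\<omega> \<in> space M. m < xi i 0 w \<omega>} = measure_pmf.prob mu {m<..}"
    using prob_eq_measure_pmf[OF measurable_xi[OF i] law_xi[OF i], where A = "{m<..}"] by simp
  finally show ?case
    using snoc by simp
qed

lemma prob_left_child_vertex_event:
  assumes i: "1 \<le> i"
  shows "prob (left_child_event i \<inter> vertex_event i w) = prob (left_child_event i) * prob (vertex_event i w)"
proof -
  have "left_child_event i \<inter> vertex_event i w = {\<omega> \<in> space M.
      (\<lambda>f. 1 \<le> fst (projl (f (Inl i)))) (restrict (\<lambda>j. inputs j \<omega>) {Inl i})
      \<and> (\<lambda>f. w \<in> gw_tree (\<lambda>u. projr (f (Inr (i, 0, u))))) (restrict (\<lambda>j. inputs j \<omega>) (prefix_index i w))}"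
    unfolding left_child_event_restrict vertex_event_restrict by blast
  also have "prob \<dots> = prob (left_child_event i) * prob (vertex_event i w)"
    unfolding left_child_event_restrict vertex_event_restrict
    by (rule prob_restrict_indep[OF indep_inputs _ finite_prefix_index _ _ prefix_index_subset[OF i]])
       (use i in \<open>auto simp: prefix_index_def input_index_def\<close>)
  finally show ?thesis .
qed

lemma prob_left_child_event_ge:
  assumes i: "1 \<le> i" and k: "2 \<le> k"
  shows "pmf mu k \<le> prob (left_child_event i)"
proof -
  obtain j where j: "k = j + 2"
    using k le_iff_add by (metis add.commute)
  have "pmf mu k = prob {\<omega> \<in> space M. LR i \<omega> = (1, j)}"
    using law_LR[OF i, of 1 j] j by simp
  also have "\<dots> \<le> prob (left_child_event i)"
    using left_child_event_in_events[OF i] by (intro finite_measure_mono) (auto simp: left_child_event_def)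
  finally show ?thesis .
qed

definition left_size_var :: "nat \<Rightarrow> nat \<Rightarrow> nat \<Rightarrow> 'a \<Rightarrow> real" where
  "left_size_var D B i \<omega> = real (truncated_left_size D B (\<lambda>k. LR k \<omega>) (\<lambda>k m w. xi k m w \<omega>) i)"

lemma left_size_var_eq_sum_indicator:
  assumes "\<omega> \<in> space M"
  shows "left_size_var D B i \<omega>
    = (\<Sum>w\<in>short_words D {..<B}. indicator (left_child_event i \<inter> vertex_event i w) \<omega>)"
  using assms finite_short_words[of "{..<B}" D]
  by (simp add: left_size_var_def truncated_left_size_def left_child_event_def vertex_event_def
      indicator_def sum.If_cases Int_def)

lemma expectation_left_size_var:
  assumes i: "1 \<le> i"
  shows "expectation (left_size_var D B i)
    = prob (left_child_event i) * (\<Sum>d\<le>D. (\<Sum>m<B. measure_pmf.prob mu {m<..}) ^ d)"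
proof -
  have events: "left_child_event i \<inter> vertex_event i w \<in> events" for w
    using left_child_event_in_events[OF i] vertex_event_in_events[OF i] by blast
  have "expectation (left_size_var D B i)
      = expectation (\<lambda>\<omega>. \<Sum>w\<in>short_words D {..<B}. indicator (left_child_event i \<inter> vertex_event i w) \<omega>)"
    by (rule Bochner_Integration.integral_cong) (simp_all add: left_size_var_eq_sum_indicator)
  also have "\<dots> = (\<Sum>w\<in>short_words D {..<B}. prob (left_child_event i \<inter> vertex_event i w))"
    using events by (subst Bochner_Integration.integral_sum) (auto intro: integrable_const_bound[where B = 1])
  also have "\<dots> = prob (left_child_event i) * (\<Sum>w\<in>short_words D {..<B}. \<Prod>m\<leftarrow>w. measure_pmf.prob mu {m<..})"
    by (simp add: prob_left_child_vertex_event[OF i] prob_vertex_event[OF i] sum_distrib_left)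
  finally show ?thesis
    by (simp add: sum_prod_list_short_words)
qed

lemma left_size_var_bounds:
  "0 \<le> left_size_var D B i \<omega> \<and> left_size_var D B i \<omega> \<le> real (card (short_words D {..<B}))"
  using card_mono[OF finite_short_words[of "{..<B}" D],
      of "{w \<in> short_words D {..<B}. w \<in> gw_tree (\<lambda>u. xi i 0 u \<omega>)}"]
  by (auto simp: left_size_var_def truncated_left_size_def)

lemma indep_left_size_var:
  assumes "L \<subseteq> {1..}"
  shows "indep_vars (\<lambda>_. borel) (left_size_var D B) L"
proof -
  define block :: "nat \<Rightarrow> (nat + nat \<times> nat \<times> nat list) set"
    where "block j = insert (Inl j) (Inr ` ({j} \<times> {0} \<times> short_words D {..<B}))" for j
  define size_of where "size_of j f = real (if 1 \<le> fst (projl (f (Inl j)))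
    then card {w \<in> short_words D {..<B}. w \<in> gw_tree (\<lambda>u. projr (f (Inr (j, 0, u))))} else 0)"
    for j and f :: "nat + nat \<times> nat \<times> nat list \<Rightarrow> (nat \<times> nat) + nat"
  have size_of: "size_of j (restrict (\<lambda>i. inputs i \<omega>) (block j)) = left_size_var D B j \<omega>" for j \<omega>
  proof -
    have "w \<in> gw_tree (\<lambda>u. projr (restrict (\<lambda>i. inputs i \<omega>) (block j) (Inr (j, 0, u))))
        \<longleftrightarrow> w \<in> gw_tree (\<lambda>u. xi j 0 u \<omega>)" if "w \<in> short_words D {..<B}" for w
      using that
      by (intro in_gw_tree_restrict_inputs)
         (auto simp: prefix_index_def block_def intro!: imageI take_in_short_words)
    then show ?thesis
      by (auto simp: size_of_def left_size_var_def truncated_left_size_def block_def inputs_def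
          intro!: arg_cong[where f = card])
  qed
  have "indep_vars (\<lambda>j. PiM (block j) (\<lambda>_. count_space UNIV)) (\<lambda>j \<omega>. restrict (\<lambda>i. inputs i \<omega>) (block j)) L"
    using assms
    by (intro indep_vars_restrict[OF indep_inputs])
       (auto simp: disjoint_family_on_def block_def input_index_def)
  then have "indep_vars (\<lambda>_. borel) (\<lambda>j \<omega>. size_of j (restrict (\<lambda>i. inputs i \<omega>) (block j))) L"
    by (rule indep_vars_compose2)
       (auto intro: measurable_PiM_count_space_finite simp: block_def finite_short_words)
  then show ?thesis
    by (simp add: size_of)
qed

lemma exists_expectation_left_size_var_ge:
  assumes mean: "measure_pmf.expectation mu real = 1"
    and var_pos: "measure_pmf.variance mu real > 0"
  shows "\<exists>D B. \<forall>i\<ge>1. a \<le> expectation (left_size_var D B i)"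
proof -
  obtain k where k: "2 \<le> k" "0 < pmf mu k"
    using exists_pmf_pos_ge_two[OF mean var_pos] by blast
  obtain D B where DB: "a / pmf mu k \<le> (\<Sum>d\<le>D. (\<Sum>m<B. measure_pmf.prob mu {m<..}) ^ d)"
    using expected_truncated_gw_size_unbounded[OF mean] by blast
  have "a \<le> expectation (left_size_var D B i)" if i: "1 \<le> i" for i
  proof -
    have "0 \<le> (\<Sum>d\<le>D. (\<Sum>m<B. measure_pmf.prob mu {m<..}) ^ d)"
      by (simp add: sum_nonneg)
    then have "pmf mu k * (\<Sum>d\<le>D. (\<Sum>m<B. measure_pmf.prob mu {m<..}) ^ d)
        \<le> expectation (left_size_var D B i)"
      unfolding expectation_left_size_var[OF i]
      by (intro mult_right_mono prob_left_child_event_ge[OF i k(1)])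
    moreover have "a \<le> pmf mu k * (\<Sum>d\<le>D. (\<Sum>m<B. measure_pmf.prob mu {m<..}) ^ d)"
      using DB k(2) by (simp add: field_simps)
    ultimately show ?thesis
      by linarith
  qed
  then show ?thesis
    by blast
qed

lemma sum_left_size_var_le_if_spine_count_gt:
  assumes K: "1 \<le> K" "real K \<le> r * real n"
    and count: "r * real n < real (spine_count (\<lambda>k. LR k \<omega>) (\<lambda>k m w. xi k m w \<omega>) n)"
  shows "(\<Sum>i\<in>{1..K - 1}. left_size_var D B i \<omega>) \<le> real n - real K"
proof -
  have "Suc (K - 1) < spine_count (\<lambda>k. LR k \<omega>) (\<lambda>k m w. xi k m w \<omega>) n"
    using K count by simp
  from spine_count_bound[OF this, of D B]
  show ?thesis
    using K by (simp add: left_size_var_def flip: of_nat_sum of_nat_add)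
qed

lemma prob_spine_count_gt_le:
  assumes EY: "\<And>i. 1 \<le> i \<Longrightarrow> 2 / r \<le> expectation (left_size_var D B i)"
    and r: "0 < r" "r \<le> 1" and n: "8 / r \<le> real n"
  shows "prob {\<omega> \<in> space M. real (spine_count (\<lambda>k. LR k \<omega>) (\<lambda>k m w. xi k m w \<omega>) n) > r * real n}
    \<le> exp (- real n / (2 * real (card (short_words D {..<B})) ^ 2))"
proof -
  define b where "b = real (card (short_words D {..<B}))"
  have b: "1 \<le> b"
    using card_short_words_pos[of "{..<B}" D] by (simp add: b_def)
  have rn: "8 \<le> r * real n"
    using n r by (simp add: field_simps)
  define K where "K = nat \<lfloor>r * real n\<rfloor>"
  have K: "real K \<le> r * real n" "r * real n - 1 < real K"
    using rn by (simp_all add: K_def)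
  define I where "I = {1..K - 1}"
  have card_I: "real (card I) = real K - 1"
    using K rn by (simp add: I_def of_nat_diff)
  define \<mu> where "\<mu> = (\<Sum>i\<in>I. expectation (left_size_var D B i))"
  have "real (card I) * (2 / r) \<le> \<mu>"
    using sum_mono[of I "\<lambda>_. 2 / r" "\<lambda>i. expectation (left_size_var D B i)"] EY
    by (simp add: \<mu>_def I_def)
  moreover have "(r * real n - 2) * (2 / r) = 2 * real n - 4 / r" "4 / r \<le> real n / 2"
    using r n by (simp_all add: field_simps)
  ultimately have eps: "real n / 2 \<le> \<mu> - (real n - real K)"
    using card_I K r mult_right_mono[of "r * real n - 2" "real (card I)" "2 / r"] by simp
  have "r * real n \<le> real n"
    using r by (simp add: mult_left_le_one_le)
  then have card_I_le: "real (card I) \<le> real n"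
    using card_I K by linarith
  have "{\<omega> \<in> space M. real (spine_count (\<lambda>k. LR k \<omega>) (\<lambda>k m w. xi k m w \<omega>) n) > r * real n}
      \<subseteq> {\<omega> \<in> space M. (\<Sum>i\<in>I. left_size_var D B i \<omega>) \<le> real n - real K}"
    using K rn sum_left_size_var_le_if_spine_count_gt[of K r n _ D B] by (auto simp: I_def)
  moreover have "(\<lambda>\<omega>. \<Sum>i\<in>I. left_size_var D B i \<omega>) \<in> borel_measurable M"
    using indep_left_size_var[of I D B] unfolding indep_vars_def I_def
    by (intro borel_measurable_sum) auto
  then have "{\<omega> \<in> space M. (\<Sum>i\<in>I. left_size_var D B i \<omega>) \<le> real n - real K} \<in> events"
    by measurable
  ultimately have "prob {\<omega> \<in> space M. real (spine_count (\<lambda>k. LR k \<omega>) (\<lambda>k m w. xi k m w \<omega>) n) > r * real n}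
      \<le> prob {\<omega> \<in> space M. (\<Sum>i\<in>I. left_size_var D B i \<omega>) \<le> real n - real K}"
    by (rule finite_measure_mono)
  also have "\<dots> \<le> exp (- 2 * (\<mu> - (real n - real K))\<^sup>2 / (real (card I) * b\<^sup>2))"
    unfolding \<mu>_def
    using eps K rn b left_size_var_bounds[of D B] indep_left_size_var[of I D B]
    by (intro prob_sum_le_Hoeffding) (auto simp: I_def \<mu>_def b_def)
  also have "\<dots> \<le> exp (- real n / (2 * b\<^sup>2))"
    using eps card_I_le card_I K rn b by (intro exp_Hoeffding_bound_le) auto
  finally show ?thesis
    by (simp add: b_def)
qed

end

theorem lemma3p1:
  fixes mu :: "nat pmf"
    and M :: "'a measure"
    and LR :: "nat \<Rightarrow> 'a \<Rightarrow> nat \<times> nat"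
    and xi :: "nat \<Rightarrow> nat \<Rightarrow> nat list \<Rightarrow> 'a \<Rightarrow> nat"
    and r :: real
  assumes mean: "measure_pmf.expectation mu real = 1"
    and var_fin: "integrable (measure_pmf mu) (\<lambda>k. (real k)^2)"
    and var_pos: "measure_pmf.variance mu real > 0"
    and P: "prob_space M"
    and indep: "prob_space.indep_vars M (\<lambda>_. count_space UNIV)
        (\<lambda>i \<omega>. case i of Inl n \<Rightarrow> Inl (LR n \<omega>) | Inr (n, m, w) \<Rightarrow> Inr (xi n m w \<omega>))
        (Inl ` {1..} \<union> Inr ` ({1..} \<times> UNIV))"
    and law_LR: "\<And>n i j. n \<ge> 1 \<Longrightarrow>
        measure M {\<omega> \<in> space M. LR n \<omega> = (i, j)} = pmf mu (i + j + 1)"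
    and law_xi: "\<And>n m w k. n \<ge> 1 \<Longrightarrow>
        measure M {\<omega> \<in> space M. xi n m w \<omega> = k} = pmf mu k"
    and r: "0 < r" "r < 1"
  shows "\<exists>C>0. \<exists>c>0. \<forall>n\<ge>1.
     measure M {\<omega> \<in> space M.
        real (spine_count (\<lambda>k. LR k \<omega>) (\<lambda>k m w. xi k m w \<omega>) n) > r * real n}
     \<le> C * exp (- c * real n)"
proof -
  interpret spine_model mu M LR xi
    by (rule spine_model.intro[OF P indep law_LR law_xi])
  obtain D B where EY: "\<And>i. 1 \<le> i \<Longrightarrow> 2 / r \<le> expectation (left_size_var D B i)"
    using exists_expectation_left_size_var_ge[OF mean var_pos] by blast
  define c where "c = 1 / (2 * real (card (short_words D {..<B})) ^ 2)"
  have c: "0 < c"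
    using card_short_words_pos[of "{..<B}" D] by (simp add: c_def)
  have "\<exists>C>0. \<forall>n. prob {\<omega> \<in> space M.
      real (spine_count (\<lambda>k. LR k \<omega>) (\<lambda>k m w. xi k m w \<omega>) n) > r * real n}
    \<le> C * exp (- c * real n)"
  proof (rule exp_decay_extend[OF c])
    show "prob {\<omega> \<in> space M.
        real (spine_count (\<lambda>k. LR k \<omega>) (\<lambda>k m w. xi k m w \<omega>) n) > r * real n}
      \<le> exp (- c * real n)" if "8 / r \<le> real n" for n
      using prob_spine_count_gt_le[OF EY r(1) _ that] r by (simp add: c_def)
  qed (rule prob_le_1)
  then show ?thesis
    using c by blast
qed

end
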